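(* Let $(X,\delta,\mu)\in\mathcal{N}(\widetilde\tau,c_1,c_2)$. Then for every $x\in X$, every $r>0$ and every $\varepsilon>0$, \[\mu\Bigl(B_\delta\bigl(x,\tfrac{(1+\varepsilon)c_2}{c_1}r\bigr)\setminus B_\delta(x,r)\Bigr)\geq\varepsilon c_2r>0.\]
   Context: $(X,\delta,\mu)\in\mathcal{N}(\widetilde\tau,c_1,c_2)$ means: $\delta$ is a quasi-distance on $X$ (nonnegative, symmetric, vanishing exactly on the diagonal, with $\delta(x,z)\leq\widetilde\tau[\delta(x,y)+\delta(y,z)]$), $\mu$ is a positive measure on a $\sigma$-algebra containing the $\delta$-balls $B_\delta(x,r)=\{y:\delta(x,y)<r\}$, $\mu(\{x\})=0$ for all $x$, $\mu(X)=+\infty$, and $0<c_1<c_2<\infty$ satisfy $c_1r\leq\mu(B_\delta(x,r))\leq c_2r$ for every $x\in X$ and $r>0$ (an unbounded non-atomic normal space of homogeneous type). *)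

theory Defs
  imports "HOL-Analysis.Analysis"
begin

definition quasi_distance :: "'a set \<Rightarrow> ('a \<Rightarrow> 'a \<Rightarrow> real) \<Rightarrow> real \<Rightarrow> bool" where
  "quasi_distance X d tau \<longleftrightarrow>
     (\<forall>x\<in>X. \<forall>y\<in>X. d x y \<ge> 0) \<and>
     (\<forall>x\<in>X. \<forall>y\<in>X. d x y = d y x) \<and>
     (\<forall>x\<in>X. \<forall>y\<in>X. d x y = 0 \<longleftrightarrow> x = y) \<and>
     (\<forall>x\<in>X. \<forall>y\<in>X. \<forall>z\<in>X. d x z \<le> tau * (d x y + d y z))"

definition dball :: "'a set \<Rightarrow> ('a \<Rightarrow> 'a \<Rightarrow> real) \<Rightarrow> 'a \<Rightarrow> real \<Rightarrow> 'a set" where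
  "dball X d x r = {y\<in>X. d x y < r}"

text \<open>(X, delta, mu) in N(tau, c1, c2), with X = space M and mu = emeasure M.\<close>
definition normal_hom_space ::
  "'a measure \<Rightarrow> ('a \<Rightarrow> 'a \<Rightarrow> real) \<Rightarrow> real \<Rightarrow> real \<Rightarrow> real \<Rightarrow> bool" where
  "normal_hom_space M d tau c1 c2 \<longleftrightarrow>
     quasi_distance (space M) d tau \<and>
     (\<forall>x\<in>space M. \<forall>r. dball (space M) d x r \<in> sets M) \<and>
     (\<forall>x\<in>space M. {x} \<in> sets M \<and> emeasure M {x} = 0) \<and>
     emeasure M (space M) = \<infinity> \<and>
     0 < c1 \<and> c1 < c2 \<and>
     (\<forall>x\<in>space M. \<forall>r>0.
        ennreal (c1 * r) \<le> emeasure M (dball (space M) d x r) \<and>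
        emeasure M (dball (space M) d x r) \<le> ennreal (c2 * r))"

end

theory Submission
  imports Defs
begin

text \<open>The ball of radius \<open>R = (1 + \<epsilon>) c\<^sub>2 r / c\<^sub>1\<close> has measure at least
  \<open>c\<^sub>1 R = (1 + \<epsilon>) c\<^sub>2 r\<close>, while the ball of radius \<open>r\<close> inside it has measure at most
  \<open>c\<^sub>2 r\<close>; the annulus between them therefore carries at least the difference \<open>\<epsilon> c\<^sub>2 r\<close>.\<close>

lemma emeasure_Diff_ge_of_bounds:
  assumes "A \<in> sets M" "B \<in> sets M" "A \<subseteq> B"
    and "ennreal b \<le> emeasure M B" "emeasure M A \<le> ennreal a" "0 \<le> a" "a \<le> b"
  shows "ennreal (b - a) \<le> emeasure M (B - A)"
proof -
  have "emeasure M A \<noteq> \<infinity>"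
    using assms(5) by (auto simp: top_unique)
  then have "emeasure M (B - A) = emeasure M B - emeasure M A"
    using assms(1-3) by (intro emeasure_Diff)
  moreover have "ennreal (b - a) = ennreal b - ennreal a"
    using assms(6,7) by (simp add: ennreal_minus)
  ultimately show ?thesis
    using assms(4,5) by (simp add: ennreal_minus_mono)
qed

lemma dball_mono: "r \<le> R \<Longrightarrow> dball X d x r \<subseteq> dball X d x R"
  unfolding dball_def by auto

theorem lemma4p4:
  fixes M :: "'a measure" and d :: "'a \<Rightarrow> 'a \<Rightarrow> real"
    and tau c1 c2 r eps :: real and x :: 'a
  assumes "normal_hom_space M d tau c1 c2"
    and "x \<in> space M" and "r > 0" and "eps > 0"
  shows "emeasure M (dball (space M) d x ((1 + eps) * c2 / c1 * r) - dball (space M) d x r)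
           \<ge> ennreal (eps * c2 * r)
         \<and> eps * c2 * r > 0"
proof -
  define R where "R = (1 + eps) * c2 / c1 * r"
  have c: "0 < c1" "c1 < c2"
    and balls: "\<And>s. dball (space M) d x s \<in> sets M"
    and bounds: "\<And>s. s > 0 \<Longrightarrow> ennreal (c1 * s) \<le> emeasure M (dball (space M) d x s) \<and>
                   emeasure M (dball (space M) d x s) \<le> ennreal (c2 * s)"
    using assms(1,2) unfolding normal_hom_space_def by blast+
  have c1R: "c1 * R = c2 * r + eps * c2 * r"
    using c unfolding R_def by (simp add: field_simps)
  have pos: "eps * c2 * r > 0"
    using assms(3,4) c by simp
  have "c1 * r < c2 * r"
    using c assms(3) by simp
  also have "\<dots> < c1 * R"
    using c1R pos by simp
  finally have "r < R"
    using c by simp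
  have "ennreal (c1 * R - c2 * r) \<le> emeasure M (dball (space M) d x R - dball (space M) d x r)"
    using bounds[of R] bounds[OF assms(3)] assms(3) \<open>r < R\<close> c1R pos c
    by (intro emeasure_Diff_ge_of_bounds balls dball_mono) auto
  then show ?thesis
    using pos c1R unfolding R_def by simp
qed

end
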